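(* Let $T,V,\alpha,\Omega,G$ satisfy the Standing Assumption (G), but with the bound in (ii) replaced by the stronger bound $|\widetilde G(t,x,z)|\le A_0(t,x)e^{B_0(t,x)|\mathrm{Im}(z)|}$ for $t\in(0,T)$, $x\in\mathbb{R}$, $z\in\Omega$. Let $F$ be holomorphic on $\Omega$ with $|F(z)|\le Ae^{B|\mathrm{Im}(z)|}$ for $z\in\Omega$, some $A,B\ge0$. Then for all $t\in(0,T)$, $x\in\mathbb{R}$, $$\lim_{\varepsilon\to0^+}\int_{\mathbb{R}}e^{-\varepsilon y^2}G(t,x,y)F(y)\,dy=\lim_{R_1,R_2\to\infty}\int_{-R_1}^{R_2}G(t,x,y)F(y)\,dy,$$ both limits existing.
   Context: Double sector: $S_\alpha:=\{0\}\cup\{z\ne0:\mathrm{Arg}(z)\in[0,\alpha]\cup[\pi,\pi+\alpha]\}$, $\mathrm{Arg}\in[0,2\pi)$. $\mathrm{AC}_{1,2}((0,T)\times\mathbb{R})$: functions $\Psi$ with $\Psi(\cdot,x)$ absolutely continuous on $(0,T)$ for all $x$ and $\Psi(t,\cdot),\partial_x\Psi(t,\cdot)$ absolutely continuous on $\mathbb{R}$ for all $t$. Standing Assumption (G): $T\in(0,\infty]$, $V:(0,T)\times\mathbb{R}\to\mathbb{C}$, $\alpha\in(0,\frac\pi2)$, $\Omega\supseteq S_\alpha$ open, $G:(0,T)\times\mathbb{R}\times\Omega\to\mathbb{C}$ holomorphic in $z$, such that: (i) for every $z\in S_\alpha$, $G(\cdot,\cdot,z)\in\mathrm{AC}_{1,2}$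 and $i\partial_tG=(-\partial_x^2+V)G$ a.e.; (ii) there is an absolutely continuous $a:(0,T)\to(0,\infty)$ with $a(t)\to\infty$ as $t\to0^+$ such that $G(t,x,z)=e^{ia(t)(z-x)^2}\widetilde G(t,x,z)$ with $|\widetilde G(t,x,z)|\le A_0(t,x)e^{B_0(t,x)|z|}$ on $(0,T)\times\mathbb{R}\times\Omega$, $A_0,B_0\ge0$ continuous, and $A_0/\sqrt a$, $B_0$ extending continuously to $[0,T)\times\mathbb{R}$; (iii) $\lim_{t\to0^+}\widetilde G(t,x,z)/\sqrt{a(t)}=1/\sqrt{i\pi}$ for all $x,z$; (iv) $|\partial_x\widetilde G|,|\partial_x^2\widetilde G|,|\partial_t\widetilde G|\le A_1(t,x)e^{B_1(t,x)|z|}$ for $z\in S_\alpha$, with $A_1\ge0$ locally integrable on $(0,T)\times\mathbb{R}$ and $B_1\ge0$ continuous. *)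

theory Defs
  imports "HOL-Analysis.Analysis"
begin

definition abs_cont_on_interval :: "(real \<Rightarrow> 'a::real_normed_vector) \<Rightarrow> real \<Rightarrow> real \<Rightarrow> bool" where
  "abs_cont_on_interval f a b \<longleftrightarrow>
     (\<forall>e>0. \<exists>d>0. \<forall>(n::nat) (l::nat \<Rightarrow> real) (r::nat \<Rightarrow> real).
        (\<forall>i<n. a \<le> l i \<and> l i \<le> r i \<and> r i \<le> b) \<and>
        (\<forall>i<n. \<forall>j<n. i \<noteq> j \<longrightarrow> r i \<le> l j \<or> r j \<le> l i) \<and>
        (\<Sum>i<n. r i - l i) < d
        \<longrightarrow> (\<Sum>i<n. norm (f (r i) - f (l i))) < e)"

definition abs_cont_on :: "(real \<Rightarrow> 'a::real_normed_vector) \<Rightarrow> real set \<Rightarrow> bool" where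
  "abs_cont_on f I \<longleftrightarrow> (\<forall>a b. a \<le> b \<longrightarrow> {a..b} \<subseteq> I \<longrightarrow> abs_cont_on_interval f a b)"

definition time_int :: "ereal \<Rightarrow> real set" where
  "time_int T = {t. 0 < t \<and> ereal t < T}"

text \<open>Double sector S_alpha: 0, together with all z \<noteq> 0 whose argument (taken in [0,2pi))
  lies in [0,alpha] \<union> [pi,pi+alpha] (alpha < pi/2, so these angles are in [0,2pi)).\<close>
definition double_sector :: "real \<Rightarrow> complex set" where
  "double_sector \<alpha> = {z. z = 0 \<or>
      (\<exists>\<theta>. (\<theta> \<in> {0..\<alpha>} \<or> \<theta> \<in> {pi..pi+\<alpha>}) \<and> z = complex_of_real (cmod z) * cis \<theta>)}"

text \<open>Psi(t,.) is required to be differentiable everywhere with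
  x-derivative Dx(t,.), which is absolutely continuous (this is the class, since an absolutely
  continuous function whose a.e. derivative is absolutely continuous is C^1).\<close>
definition AC12 :: "ereal \<Rightarrow> (real \<Rightarrow> real \<Rightarrow> complex) \<Rightarrow> (real \<Rightarrow> real \<Rightarrow> complex) \<Rightarrow> bool" where
  "AC12 T \<Psi> Dx \<longleftrightarrow>
     (\<forall>x. abs_cont_on (\<lambda>t. \<Psi> t x) (time_int T)) \<and>
     (\<forall>t\<in>time_int T. abs_cont_on (\<lambda>x. \<Psi> t x) UNIV \<and> abs_cont_on (\<lambda>x. Dx t x) UNIV \<and>
        (\<forall>x. ((\<lambda>y. \<Psi> t y) has_vector_derivative Dx t x) (at x)))"

definition assumption_G_Im ::
  "ereal \<Rightarrow> (real \<Rightarrow> real \<Rightarrow> complex) \<Rightarrow> real \<Rightarrow> complex set \<Rightarrow>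
   (real \<Rightarrow> real \<Rightarrow> complex \<Rightarrow> complex) \<Rightarrow> bool" where
  "assumption_G_Im T V \<alpha> \<Omega> G \<longleftrightarrow>
    0 < T \<and> 0 < \<alpha> \<and> \<alpha> < pi / 2 \<and> open \<Omega> \<and> double_sector \<alpha> \<subseteq> \<Omega> \<and>
    (\<forall>t\<in>time_int T. \<forall>x. (G t x) holomorphic_on \<Omega>) \<and>
    \<comment> \<open>(i)\<close>
    (\<forall>z\<in>double_sector \<alpha>. \<exists>Dx.
       AC12 T (\<lambda>t x. G t x z) Dx \<and>
       (AE p in lborel. fst p \<in> time_int T \<longrightarrow>
          (\<exists>Gt Gxx. ((\<lambda>s. G s (snd p) z) has_vector_derivative Gt) (at (fst p)) \<and>
                    ((\<lambda>y. Dx (fst p) y) has_vector_derivative Gxx) (at (snd p)) \<and>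
                    \<i> * Gt = - Gxx + V (fst p) (snd p) * G (fst p) (snd p) z))) \<and>
    (\<exists>a Gtil A0 B0 A1 B1.
       \<comment> \<open>(ii)\<close>
       abs_cont_on a (time_int T) \<and> (\<forall>t\<in>time_int T. 0 < a t) \<and>
       filterlim a at_top (at_right 0) \<and>
       (\<forall>t\<in>time_int T. \<forall>x. \<forall>z\<in>\<Omega>.
          G t x z = exp (\<i> * complex_of_real (a t) * (z - complex_of_real x)\<^sup>2) * Gtil t x z) \<and>
       (\<forall>t\<in>time_int T. \<forall>x. \<forall>z\<in>\<Omega>.
          cmod (Gtil t x z) \<le> A0 t x * exp (B0 t x * \<bar>Im z\<bar>)) \<and>
       (\<forall>t\<in>time_int T. \<forall>x. 0 \<le> A0 t x \<and> 0 \<le> B0 t x) \<and>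
       continuous_on (time_int T \<times> UNIV) (\<lambda>p. A0 (fst p) (snd p)) \<and>
       continuous_on (time_int T \<times> UNIV) (\<lambda>p. B0 (fst p) (snd p)) \<and>
       (\<exists>h. continuous_on ({t. 0 \<le> t \<and> ereal t < T} \<times> UNIV) h \<and>
            (\<forall>t\<in>time_int T. \<forall>x. h (t, x) = A0 t x / sqrt (a t))) \<and>
       (\<exists>h. continuous_on ({t. 0 \<le> t \<and> ereal t < T} \<times> UNIV) h \<and>
            (\<forall>t\<in>time_int T. \<forall>x. h (t, x) = B0 t x)) \<and>
       \<comment> \<open>(iii)\<close>
       (\<forall>x. \<forall>z\<in>\<Omega>. ((\<lambda>t. Gtil t x z / complex_of_real (sqrt (a t))) \<longlongrightarrow> 1 / csqrt (\<i> * pi))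
                      (at_right 0)) \<and>
       \<comment> \<open>(iv): bounds on the derivatives of G~ wherever they exist\<close>
       (\<forall>t\<in>time_int T. \<forall>x. 0 \<le> A1 t x \<and> 0 \<le> B1 t x) \<and>
       (\<forall>K. compact K \<longrightarrow> K \<subseteq> time_int T \<times> UNIV \<longrightarrow>
            (\<lambda>p. A1 (fst p) (snd p)) integrable_on K) \<and>
       continuous_on (time_int T \<times> UNIV) (\<lambda>p. B1 (fst p) (snd p)) \<and>
       (\<forall>z\<in>double_sector \<alpha>. \<forall>t\<in>time_int T. \<forall>x.
          (\<forall>D. ((\<lambda>s. Gtil s x z) has_vector_derivative D) (at t) \<longrightarrow>
               cmod D \<le> A1 t x * exp (B1 t x * cmod z)) \<and>
          (\<forall>g'. (\<forall>y. ((\<lambda>y'. Gtil t y' z) has_vector_derivative g' y) (at y)) \<longrightarrow>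
               cmod (g' x) \<le> A1 t x * exp (B1 t x * cmod z) \<and>
               (\<forall>D. (g' has_vector_derivative D) (at x) \<longrightarrow>
                    cmod D \<le> A1 t x * exp (B1 t x * cmod z)))))"

end

theory Submission
  imports Defs "HOL-Complex_Analysis.Complex_Analysis" "HOL-Probability.Probability"
    "HOL-Real_Asymp.Real_Asymp"
begin

(* Write k = G(t,x,.) F.  Since |exp(i a (z - x)^2)| = exp(-2a (Re z - x) Im z), the bounds on
   G~ and F give |k z| <= M exp(b |Im z| - c Re z Im z) with c = 2a > 0.  On the wedge
   0 <= Im z <= tau Re z this makes k decay like exp(-c tau s^2) along the ray s(1 + i tau),
   while the vertical side {R + i s : 0 <= s <= R tau} contributes O(1/R).  By Cauchy's theorem
   the integral of k over [0,R] therefore converges to the absolutely convergent integral along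
   the ray, and likewise on the negative half-line.  The same holds for exp(-eps z^2) k z, whose
   integral over the real line is thus the sum of the two ray integrals; on the rays
   |exp(-eps z^2)| <= 1 because tau <= 1, so dominated convergence lets eps tend to 0. *)

definition wedge :: "real \<Rightarrow> complex set" where
  "wedge \<tau> = {z. 0 \<le> Im z \<and> Im z \<le> \<tau> * Re z}"

lemma convex_wedge: "convex (wedge \<tau>)"
proof -
  have "wedge \<tau> = {z. 0 \<le> inner \<i> z} \<inter> {z. inner (\<i> - complex_of_real \<tau>) z \<le> 0}"
    by (auto simp: wedge_def inner_complex_def)
  then show ?thesis by (metis convex_Int convex_halfspace_ge convex_halfspace_le)
qed

lemma Re_nonneg_if_in_wedge: "0 < \<tau> \<Longrightarrow> z \<in> wedge \<tau> \<Longrightarrow> 0 \<le> Re z"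
  unfolding wedge_def by (smt (verit, ccfv_SIG) mem_Collect_eq mult_pos_neg)

lemma wedge_mono: "0 < \<tau> \<Longrightarrow> \<tau> \<le> \<tau>' \<Longrightarrow> wedge \<tau> \<subseteq> wedge \<tau>'"
  using Re_nonneg_if_in_wedge unfolding wedge_def by (fastforce intro: order_trans mult_right_mono)

lemma of_real_in_wedge: "0 \<le> \<tau> \<Longrightarrow> 0 \<le> y \<Longrightarrow> complex_of_real y \<in> wedge \<tau>"
  by (simp add: wedge_def)

lemma Im_sq_le_Re_sq_if_in_wedge:
  assumes "0 < \<tau>" "\<tau> \<le> 1" "z \<in> wedge \<tau>"
  shows "(Im z)\<^sup>2 \<le> (Re z)\<^sup>2"
proof -
  have "Im z \<le> Re z"
    using assms Re_nonneg_if_in_wedge[of \<tau> z] mult_left_le_one_le[of "Re z" \<tau>]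
    by (auto simp: wedge_def)
  then show ?thesis
    using assms(3) by (intro power_mono) (auto simp: wedge_def)
qed

lemma norm_exp_gaussian_le_1:
  assumes "0 \<le> \<epsilon>" "0 < \<tau>" "\<tau> \<le> 1" "z \<in> wedge \<tau>"
  shows "cmod (exp (- complex_of_real \<epsilon> * z\<^sup>2)) \<le> 1"
proof -
  have "Re (- complex_of_real \<epsilon> * z\<^sup>2) = - (\<epsilon> * ((Re z)\<^sup>2 - (Im z)\<^sup>2))"
    by (simp add: power2_eq_square algebra_simps)
  also have "\<dots> \<le> 0"
    using Im_sq_le_Re_sq_if_in_wedge[OF assms(2-4)] assms(1) by simp
  finally show ?thesis by (simp add: norm_exp_eq_Re)
qed

lemma wedge_polar:
  assumes "z \<in> wedge (tan \<alpha>)" "0 < \<alpha>" "\<alpha> < pi/2"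
  shows "\<exists>\<theta>\<in>{0..\<alpha>}. z = complex_of_real (cmod z) * cis \<theta>"
proof (cases "Re z = 0")
  case True
  with assms(1) have "z = 0" by (simp add: wedge_def complex_eq_iff)
  then show ?thesis using assms(2) by auto
next
  case False
  have tan_pos: "0 < tan \<alpha>" using assms by (simp add: tan_gt_zero)
  with assms(1) False have Re_pos: "0 < Re z"
    using Re_nonneg_if_in_wedge by fastforce
  define q where "q = Im z / Re z"
  have q: "0 \<le> q" "q \<le> tan \<alpha>"
    using assms(1) Re_pos by (auto simp: q_def wedge_def pos_divide_le_eq)
  have "cmod z = Re z * sqrt (1 + q\<^sup>2)"
  proof -
    have "cmod z = sqrt ((Re z)\<^sup>2 * (1 + q\<^sup>2))"
      unfolding cmod_def q_def using Re_pos by (simp add: field_simps power2_eq_square)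
    then show ?thesis using Re_pos by (simp add: real_sqrt_mult)
  qed
  moreover have "1 + q\<^sup>2 \<noteq> 0" by (metis add_pos_nonneg zero_less_one zero_le_power2 less_irrefl)
  ultimately have "z = complex_of_real (cmod z) * cis (arctan q)"
    using Re_pos unfolding q_def by (simp add: complex_eq_iff cos_arctan sin_arctan)
  moreover have "arctan q \<in> {0..\<alpha>}"
    using q arctan_le_iff[of 0 q] arctan_le_iff[of q "tan \<alpha>"] arctan_tan[of \<alpha>] assms(2,3)
    by simp
  ultimately show ?thesis by blast
qed

lemma wedge_subset_double_sector:
  assumes "0 < \<alpha>" "\<alpha> < pi/2"
  shows "wedge (tan \<alpha>) \<union> uminus ` wedge (tan \<alpha>) \<subseteq> double_sector \<alpha>"
proof -
  have "z \<in> double_sector \<alpha> \<and> - z \<in> double_sector \<alpha>" if z: "z \<in> wedge (tan \<alpha>)" for z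
  proof -
    obtain \<theta> where \<theta>: "\<theta> \<in> {0..\<alpha>}" "z = complex_of_real (cmod z) * cis \<theta>"
      using wedge_polar[OF z assms] by blast
    have "- z = complex_of_real (cmod (- z)) * cis (\<theta> + pi)"
      using \<theta>(2) by (simp add: cis_def complex_eq_iff)
    moreover have "\<theta> + pi \<in> {pi..pi+\<alpha>}" using \<theta>(1) by auto
    ultimately show ?thesis
      using \<theta> unfolding double_sector_def by blast
  qed
  then show ?thesis by blast
qed

lemma has_integral_primitive_along_path:
  fixes k \<Phi> :: "complex \<Rightarrow> complex" and p p' :: "real \<Rightarrow> complex"
  assumes \<Phi>: "\<And>z. z \<in> S \<Longrightarrow> (\<Phi> has_field_derivative k z) (at z within S)"
    and "a \<le> b" and p: "\<And>s. s \<in> {a..b} \<Longrightarrow> (p has_vector_derivative p' s) (at s within {a..b})"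
    and "p ` {a..b} \<subseteq> S"
  shows "((\<lambda>s. p' s * k (p s)) has_integral \<Phi> (p b) - \<Phi> (p a)) {a..b}"
proof -
  have "((\<lambda>s. p' s * k (p s)) has_integral (\<Phi> \<circ> p) b - (\<Phi> \<circ> p) a) {a..b}"
  proof (rule fundamental_theorem_of_calculus[OF \<open>a \<le> b\<close>])
    fix s assume s: "s \<in> {a..b}"
    have "(\<Phi> has_field_derivative k (p s)) (at (p s) within p ` {a..b})"
      using \<Phi> \<open>p ` {a..b} \<subseteq> S\<close> s by (blast intro: DERIV_subset)
    then show "((\<Phi> \<circ> p) has_vector_derivative p' s * k (p s)) (at s within {a..b})"
      by (rule field_vector_diff_chain_within[OF p[OF s]])
  qed
  then show ?thesis by simp
qed

lemma integral_atLeastAtMost_tendsto_set_integral: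
  fixes f :: "real \<Rightarrow> 'a::euclidean_space"
  assumes "set_integrable lborel {a..} f"
  shows "((\<lambda>R. integral {a..R} f) \<longlongrightarrow> (LINT s:{a..}|lborel. f s)) at_top"
proof -
  have "((\<lambda>R. LINT s:{a..R}|lborel. f s) \<longlongrightarrow> (LINT s:{a..}|lborel. f s)) at_top"
    by (rule tendsto_set_lebesgue_integral_at_top[OF _ assms]) auto
  moreover have "(LINT s:{a..R}|lborel. f s) = integral {a..R} f" for R
    by (rule set_borel_integral_eq_integral) (rule set_integrable_subset[OF assms], auto)
  ultimately show ?thesis by simp
qed

lemma set_integral_symmetric_interval_tendsto:
  fixes f :: "real \<Rightarrow> 'a::{banach, second_countable_topology}"
  assumes f: "integrable lborel f"
  shows "((\<lambda>R. LINT y:{-R..R}|lborel. f y) \<longlongrightarrow> (LINT y|lborel. f y)) at_top"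
  unfolding set_lebesgue_integral_def
proof (rule integral_dominated_convergence_at_top[where w="\<lambda>y. norm (f y)"])
  show "f \<in> borel_measurable lborel" "integrable lborel (\<lambda>y. norm (f y))"
    using f by auto
  then show "(\<lambda>y. indicator {-R..R} y *\<^sub>R f y) \<in> borel_measurable lborel" for R
    by simp
  show "AE y in lborel. ((\<lambda>R. indicator {-R..R} y *\<^sub>R f y) \<longlongrightarrow> f y) at_top"
  proof (intro AE_I2 tendsto_eventually)
    fix y :: real
    show "\<forall>\<^sub>F R in at_top. indicator {-R..R} y *\<^sub>R f y = f y"
      using eventually_ge_at_top[of "\<bar>y\<bar>"] by eventually_elim (auto simp: indicator_def)
  qed
  show "\<forall>\<^sub>F R in at_top. AE y in lborel. norm (indicator {-R..R} y *\<^sub>R f y) \<le> norm (f y)"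
    by (intro always_eventually allI AE_I2) (auto simp: indicator_def)
qed

lemma integrable_gaussian:
  assumes "0 < (\<epsilon>::real)"
  shows "integrable lborel (\<lambda>y::real. exp (- \<epsilon> * y\<^sup>2))"
proof -
  define \<sigma> where "\<sigma> = sqrt (1 / (2 * \<epsilon>))"
  have \<sigma>: "\<sigma>\<^sup>2 = 1 / (2 * \<epsilon>)" "0 < \<sigma>" using assms by (simp_all add: \<sigma>_def)
  then have "(\<lambda>y. exp (- \<epsilon> * y\<^sup>2)) = (\<lambda>y. sqrt (pi / \<epsilon>) * normal_density 0 \<sigma> y)"
    using assms by (simp add: normal_density_def real_sqrt_divide mult.commute)
  then show ?thesis using \<sigma>(2) by simp
qed

lemma quadratic_le_linear:
  fixes a b s :: real assumes "0 < a"
  shows "b * s - a * s\<^sup>2 \<le> (b + 1)\<^sup>2 / (4 * a) - s"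
proof -
  have "0 \<le> a * (s - (b + 1) / (2 * a))\<^sup>2" using assms by simp
  also have "\<dots> = a * s\<^sup>2 - (b + 1) * s + (b + 1)\<^sup>2 / (4 * a)"
    using assms by (simp add: field_simps power2_eq_square)
  finally show ?thesis by (simp add: algebra_simps)
qed

lemma set_integrable_exp_neg: "set_integrable lborel {0::real..} (\<lambda>s. exp (- s))"
proof -
  have "(\<lambda>s. exp (- 1 * s)) integrable_on {0::real..}"
    by (rule integrable_on_exp_minus_to_infinity) simp
  then have "(\<lambda>s::real. exp (- s)) absolutely_integrable_on {0..}"
    by (intro nonnegative_absolutely_integrable_1) auto
  then show ?thesis
    unfolding set_integrable_def by (subst (asm) integrable_completion) auto
qed

definition ray_integral :: "real \<Rightarrow> (complex \<Rightarrow> complex) \<Rightarrow> complex" where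
  "ray_integral \<tau> k =
     (LINT s:{0..}|lborel. (1 + \<i> * complex_of_real \<tau>) * k (complex_of_real s * (1 + \<i> * complex_of_real \<tau>)))"

locale wedge_decay =
  fixes \<tau> c b M :: real and k :: "complex \<Rightarrow> complex"
  assumes \<tau>_pos: "0 < \<tau>" and c_pos: "0 < c"
    and holomorphic: "k holomorphic_on wedge \<tau>"
    and bound: "\<And>z. z \<in> wedge \<tau> \<Longrightarrow> cmod (k z) \<le> M * exp (b * Im z - c * Re z * Im z)"
begin

lemma M_nonneg: "0 \<le> M"
  using order_trans[OF norm_ge_zero bound[of 0]] by (simp add: wedge_def)

lemma continuous_on_wedge: "continuous_on (wedge \<tau>) k"
  using holomorphic by (rule holomorphic_on_imp_continuous_on)

lemma ray_in_wedge: "0 \<le> s \<Longrightarrow> complex_of_real s * (1 + \<i> * complex_of_real \<tau>) \<in> wedge \<tau>"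
  using \<tau>_pos by (simp add: wedge_def)

lemma contour_shift:
  assumes R: "0 \<le> R"
  shows "integral {0..R} (\<lambda>s. k (complex_of_real s)) =
           integral {0..R} (\<lambda>s. (1 + \<i> * complex_of_real \<tau>) * k (complex_of_real s * (1 + \<i> * complex_of_real \<tau>)))
         - integral {0..R*\<tau>} (\<lambda>s. \<i> * k (complex_of_real R + \<i> * complex_of_real s))"
proof -
  obtain \<Phi> where \<Phi>: "\<And>z. z \<in> wedge \<tau> \<Longrightarrow> (\<Phi> has_field_derivative k z) (at z within wedge \<tau>)"
  proof (rule holomorphic_convex_primitive[OF convex_wedge finite.emptyI continuous_on_wedge])
    fix z assume "z \<in> interior (wedge \<tau>) - {}"
    then show "k field_differentiable at z"
      using holomorphic by (metis DiffD1 at_within_interior holomorphic_on_def interior_subset subsetD)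
  qed auto
  have real_axis: "((\<lambda>s. 1 * k (complex_of_real s)) has_integral \<Phi> R - \<Phi> (complex_of_real 0)) {0..R}"
    by (rule has_integral_primitive_along_path[OF \<Phi> R, of complex_of_real "\<lambda>_. 1"])
      (use \<tau>_pos in \<open>auto simp: wedge_def intro!: derivative_eq_intros\<close>)
  have ray: "((\<lambda>s. (1 + \<i> * complex_of_real \<tau>) * k (complex_of_real s * (1 + \<i> * complex_of_real \<tau>)))
      has_integral \<Phi> (complex_of_real R * (1 + \<i> * complex_of_real \<tau>))
                   - \<Phi> (complex_of_real 0 * (1 + \<i> * complex_of_real \<tau>))) {0..R}"
    by (rule has_integral_primitive_along_path[OF \<Phi> R])
      (auto simp: ray_in_wedge intro!: derivative_eq_intros)
  have side: "((\<lambda>s. \<i> * k (complex_of_real R + \<i> * complex_of_real s))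
      has_integral \<Phi> (complex_of_real R + \<i> * complex_of_real (R*\<tau>))
                   - \<Phi> (complex_of_real R + \<i> * complex_of_real 0)) {0..R*\<tau>}"
    by (rule has_integral_primitive_along_path[OF \<Phi>])
      (use R \<tau>_pos in \<open>auto simp: wedge_def mult.commute[of R \<tau>] intro!: derivative_eq_intros\<close>)
  have "complex_of_real R + \<i> * complex_of_real (R*\<tau>) = complex_of_real R * (1 + \<i> * complex_of_real \<tau>)"
    by (simp add: algebra_simps)
  then show ?thesis
    using integral_unique[OF real_axis] integral_unique[OF ray] integral_unique[OF side] by simp
qed

lemma norm_ray_integrand_le:
  assumes "0 \<le> s"
  shows "cmod ((1 + \<i> * complex_of_real \<tau>) * k (complex_of_real s * (1 + \<i> * complex_of_real \<tau>)))
           \<le> cmod (1 + \<i> * complex_of_real \<tau>) * M * exp ((b * \<tau> + 1)\<^sup>2 / (4 * (c * \<tau>))) * exp (- s)"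
proof -
  let ?z = "complex_of_real s * (1 + \<i> * complex_of_real \<tau>)"
  have "b * Im ?z - c * Re ?z * Im ?z = (b * \<tau>) * s - (c * \<tau>) * s\<^sup>2"
    by (simp add: power2_eq_square algebra_simps)
  also have "\<dots> \<le> (b * \<tau> + 1)\<^sup>2 / (4 * (c * \<tau>)) - s"
    using c_pos \<tau>_pos by (intro quadratic_le_linear) simp
  finally have "cmod (k ?z) \<le> M * exp ((b * \<tau> + 1)\<^sup>2 / (4 * (c * \<tau>)) - s)"
    using bound[OF ray_in_wedge[OF assms]] M_nonneg by (meson exp_le_cancel_iff mult_left_mono order_trans)
  also have "exp ((b * \<tau> + 1)\<^sup>2 / (4 * (c * \<tau>)) - s) = exp ((b * \<tau> + 1)\<^sup>2 / (4 * (c * \<tau>))) * exp (- s)"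
    by (simp add: mult_exp_exp)
  finally have "cmod (1 + \<i> * complex_of_real \<tau>) * cmod (k ?z) \<le> cmod (1 + \<i> * complex_of_real \<tau>) *
      (M * (exp ((b * \<tau> + 1)\<^sup>2 / (4 * (c * \<tau>))) * exp (- s)))"
    by (rule mult_left_mono) simp
  then show ?thesis
    by (simp add: norm_mult ac_simps)
qed

lemma continuous_on_ray_integrand:
  "continuous_on {0..} (\<lambda>s. (1 + \<i> * complex_of_real \<tau>) * k (complex_of_real s * (1 + \<i> * complex_of_real \<tau>)))"
  by (intro continuous_intros continuous_on_compose2[OF continuous_on_wedge]) (auto simp: ray_in_wedge)

lemma set_integrable_ray:
  "set_integrable lborel {0..} (\<lambda>s. (1 + \<i> * complex_of_real \<tau>) * k (complex_of_real s * (1 + \<i> * complex_of_real \<tau>)))"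
proof (rule set_integrable_bound)
  show "set_integrable lborel {0..}
          (\<lambda>s. cmod (1 + \<i> * complex_of_real \<tau>) * M * exp ((b * \<tau> + 1)\<^sup>2 / (4 * (c * \<tau>))) * exp (- s))"
    using set_integrable_exp_neg by (rule set_integrable_mult_right)
  show "set_borel_measurable lborel {0..}
          (\<lambda>s. (1 + \<i> * complex_of_real \<tau>) * k (complex_of_real s * (1 + \<i> * complex_of_real \<tau>)))"
    unfolding set_borel_measurable_def
    using borel_measurable_continuous_on_indicator[OF _ continuous_on_ray_integrand] by simp
qed (use order_trans[OF norm_ray_integrand_le abs_ge_self] in auto)

lemma vertical_integral_tendsto_0:
  "((\<lambda>R. integral {0..R*\<tau>} (\<lambda>s. \<i> * k (complex_of_real R + \<i> * complex_of_real s))) \<longlongrightarrow> 0) at_top"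
proof (rule Lim_null_comparison)
  show "((\<lambda>R. M / (c * R - b)) \<longlongrightarrow> 0) at_top" using c_pos by real_asymp
  show "\<forall>\<^sub>F R in at_top. norm (integral {0..R*\<tau>} (\<lambda>s. \<i> * k (complex_of_real R + \<i> * complex_of_real s)))
                          \<le> M / (c * R - b)"
    using eventually_ge_at_top[of "max 0 ((b + 1) / c)"]
  proof eventually_elim
    case (elim R)
    define D where "D = c * R - b"
    have R: "0 \<le> R" and D: "1 \<le> D"
      using elim c_pos by (auto simp: D_def field_simps)
    let ?f = "\<lambda>s. \<i> * k (complex_of_real R + \<i> * complex_of_real s)"
    have segment_in_wedge: "complex_of_real R + \<i> * complex_of_real s \<in> wedge \<tau>" if "s \<in> {0..R*\<tau>}" for s
      using that by (auto simp: wedge_def mult.commute)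
    have exp_integral: "((\<lambda>s. M * exp (- D * s)) has_integral M * (exp (- D * 0) / D)) {0..}"
      using has_integral_exp_minus_to_infinity[of D 0] D by (intro has_integral_mult_right) auto
    have "norm (integral {0..R*\<tau>} ?f) \<le> integral {0..R*\<tau>} (\<lambda>s. M * exp (- D * s))"
    proof (rule integral_norm_bound_integral)
      show "?f integrable_on {0..R*\<tau>}"
        using segment_in_wedge
        by (intro integrable_continuous_interval continuous_intros
              continuous_on_compose2[OF continuous_on_wedge]) auto
      show "(\<lambda>s. M * exp (- D * s)) integrable_on {0..R*\<tau>}"
        by (intro integrable_continuous_interval continuous_intros)
      fix s assume s: "s \<in> {0..R*\<tau>}"
      have "b * s - c * R * s \<le> - D * s" by (simp add: D_def algebra_simps)
      then show "norm (?f s) \<le> M * exp (- D * s)"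
        using bound[OF segment_in_wedge[OF s]] M_nonneg
        by (simp add: norm_mult) (meson exp_le_cancel_iff mult_left_mono order_trans)
    qed
    also have "\<dots> \<le> integral {0..} (\<lambda>s. M * exp (- D * s))"
      using exp_integral M_nonneg
      by (intro integral_subset_le integrable_continuous_interval continuous_intros) auto
    also have "\<dots> = M / D"
      using integral_unique[OF exp_integral] by simp
    finally show ?case by (simp add: D_def)
  qed
qed

lemma integral_tendsto_ray_integral:
  "((\<lambda>R. integral {0..R} (\<lambda>s. k (complex_of_real s))) \<longlongrightarrow> ray_integral \<tau> k) at_top"
proof -
  have "((\<lambda>R. integral {0..R} (\<lambda>s. (1 + \<i> * complex_of_real \<tau>) * k (complex_of_real s * (1 + \<i> * complex_of_real \<tau>)))
           - integral {0..R*\<tau>} (\<lambda>s. \<i> * k (complex_of_real R + \<i> * complex_of_real s)))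
         \<longlongrightarrow> ray_integral \<tau> k - 0) at_top"
    unfolding ray_integral_def
    by (intro tendsto_diff integral_atLeastAtMost_tendsto_set_integral set_integrable_ray
          vertical_integral_tendsto_0)
  moreover have "\<forall>\<^sub>F R in at_top.
      integral {0..R} (\<lambda>s. (1 + \<i> * complex_of_real \<tau>) * k (complex_of_real s * (1 + \<i> * complex_of_real \<tau>)))
        - integral {0..R*\<tau>} (\<lambda>s. \<i> * k (complex_of_real R + \<i> * complex_of_real s))
      = integral {0..R} (\<lambda>s. k (complex_of_real s))"
    using eventually_ge_at_top[of 0] by eventually_elim (rule contour_shift[symmetric])
  ultimately show ?thesis by (simp add: Lim_transform_eventually)
qed

lemma ray_integral_gaussian_factor_tendsto:
  assumes "\<tau> \<le> 1"
  shows "((\<lambda>\<epsilon>. ray_integral \<tau> (\<lambda>z. exp (- complex_of_real \<epsilon> * z\<^sup>2) * k z)) \<longlongrightarrow> ray_integral \<tau> k)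
           (at_right 0)"
proof -
  define w where "w s = complex_of_real s * (1 + \<i> * complex_of_real \<tau>)" for s
  define f where "f s = indicator {0..} s *\<^sub>R ((1 + \<i> * complex_of_real \<tau>) * k (w s))" for s
  have f: "integrable lborel f"
    using set_integrable_ray unfolding set_integrable_def f_def w_def .
  have ray_integral_eq: "ray_integral \<tau> (\<lambda>z. exp (- complex_of_real \<epsilon> * z\<^sup>2) * k z) =
      (LINT s|lborel. exp (- complex_of_real \<epsilon> * (w s)\<^sup>2) * f s)" for \<epsilon>
    unfolding ray_integral_def set_lebesgue_integral_def f_def w_def
    by (rule Bochner_Integration.integral_cong) (auto simp: indicator_def)
  have "ray_integral \<tau> k = (LINT s|lborel. f s)"
    unfolding ray_integral_def set_lebesgue_integral_def f_def w_def ..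
  moreover have "((\<lambda>t. LINT s|lborel. exp (- complex_of_real (inverse t) * (w s)\<^sup>2) * f s)
      \<longlongrightarrow> (LINT s|lborel. f s)) at_top"
  proof (rule integral_dominated_convergence_at_top[where w="\<lambda>s. norm (f s)"])
    show "f \<in> borel_measurable lborel" "integrable lborel (\<lambda>s. norm (f s))"
      using f by auto
    then show "(\<lambda>s. exp (- complex_of_real (inverse t) * (w s)\<^sup>2) * f s) \<in> borel_measurable lborel" for t
      by (intro borel_measurable_times borel_measurable_continuous_onI)
        (auto simp: w_def intro!: continuous_intros)
    show "AE s in lborel. ((\<lambda>t. exp (- complex_of_real (inverse t) * (w s)\<^sup>2) * f s) \<longlongrightarrow> f s) at_top"
    proof (intro AE_I2)
      fix s
      have "((\<lambda>t. exp (- complex_of_real (inverse t) * (w s)\<^sup>2) * f s)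
          \<longlongrightarrow> exp (- complex_of_real 0 * (w s)\<^sup>2) * f s) at_top"
        by (intro tendsto_intros tendsto_inverse_0_at_top filterlim_ident)
      then show "((\<lambda>t. exp (- complex_of_real (inverse t) * (w s)\<^sup>2) * f s) \<longlongrightarrow> f s) at_top"
        by simp
    qed
    show "\<forall>\<^sub>F t in at_top. AE s in lborel.
        norm (exp (- complex_of_real (inverse t) * (w s)\<^sup>2) * f s) \<le> norm (f s)"
    proof (rule eventually_mono[OF eventually_gt_at_top[of 0]], intro AE_I2)
      fix t s :: real assume t: "0 < t"
      show "norm (exp (- complex_of_real (inverse t) * (w s)\<^sup>2) * f s) \<le> norm (f s)"
      proof (cases "0 \<le> s")
        case True
        then have "norm (exp (- complex_of_real (inverse t) * (w s)\<^sup>2)) \<le> 1"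
          using norm_exp_gaussian_le_1 ray_in_wedge \<tau>_pos assms t by (simp add: w_def)
        then show ?thesis by (simp add: norm_mult mult_left_le_one_le)
      qed (simp add: f_def)
    qed
  qed
  ultimately show ?thesis
    unfolding filterlim_at_right_to_top ray_integral_eq by simp
qed

end

lemma wedge_decay_gaussian_factor:
  assumes "wedge_decay \<tau> c b M k" "\<tau> \<le> 1" "0 \<le> \<epsilon>"
  shows "wedge_decay \<tau> c b M (\<lambda>z. exp (- complex_of_real \<epsilon> * z\<^sup>2) * k z)"
proof -
  interpret wedge_decay \<tau> c b M k by fact
  show ?thesis
  proof
    show "(\<lambda>z. exp (- complex_of_real \<epsilon> * z\<^sup>2) * k z) holomorphic_on wedge \<tau>"
      using holomorphic by (intro holomorphic_intros)
    fix z assume z: "z \<in> wedge \<tau>"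
    have "cmod (exp (- complex_of_real \<epsilon> * z\<^sup>2)) * cmod (k z) \<le> 1 * cmod (k z)"
      by (rule mult_right_mono[OF norm_exp_gaussian_le_1[OF assms(3) \<tau>_pos assms(2) z]]) simp
    then show "cmod (exp (- complex_of_real \<epsilon> * z\<^sup>2) * k z) \<le> M * exp (b * Im z - c * Re z * Im z)"
      using bound[OF z] by (simp add: norm_mult)
  qed (rule \<tau>_pos c_pos)+
qed

lemma continuous_on_real_line:
  assumes "wedge_decay \<tau> c b M k" "wedge_decay \<tau> c b M (\<lambda>z. k (- z))"
  shows "continuous_on UNIV (\<lambda>y. k (complex_of_real y))"
proof -
  have "continuous_on {0..} (\<lambda>y. k (complex_of_real y))"
    using wedge_decay.\<tau>_pos[OF assms(1)]
    by (intro continuous_on_compose2[OF wedge_decay.continuous_on_wedge[OF assms(1)]])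
      (auto intro!: continuous_intros simp: of_real_in_wedge)
  moreover have "continuous_on {..0} (\<lambda>y. (\<lambda>z. k (- z)) (complex_of_real (- y)))"
    using wedge_decay.\<tau>_pos[OF assms(1)]
    by (intro continuous_on_compose2[OF wedge_decay.continuous_on_wedge[OF assms(2)]])
      (auto intro!: continuous_intros simp: wedge_def mult_nonneg_nonpos)
  ultimately have "continuous_on ({..0} \<union> {0..}) (\<lambda>y. k (complex_of_real y))"
    by (intro continuous_on_closed_Un) auto
  moreover have "{..0} \<union> {0..} = (UNIV :: real set)" by auto
  ultimately show ?thesis by simp
qed

lemma norm_le_on_real_line:
  assumes "wedge_decay \<tau> c b M k" "wedge_decay \<tau> c b M (\<lambda>z. k (- z))"
  shows "cmod (k (complex_of_real y)) \<le> M"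
proof (cases "0 \<le> y")
  case True
  then show ?thesis
    using wedge_decay.bound[OF assms(1), of y] wedge_decay.\<tau>_pos[OF assms(1)] by (simp add: of_real_in_wedge)
next
  case False
  then show ?thesis
    using wedge_decay.bound[OF assms(2), of "- y"] wedge_decay.\<tau>_pos[OF assms(1)]
    by (simp add: wedge_def mult_nonneg_nonpos)
qed

lemma improper_integral_tendsto_ray_integrals:
  assumes pos: "wedge_decay \<tau> c b M k" and neg: "wedge_decay \<tau> c b M (\<lambda>z. k (- z))"
  shows "((\<lambda>(R1, R2). LINT y:{-R1..R2}|lborel. k (complex_of_real y))
           \<longlongrightarrow> ray_integral \<tau> k + ray_integral \<tau> (\<lambda>z. k (- z))) (at_top \<times>\<^sub>F at_top)"
proof -
  let ?I = "\<lambda>R1 R2. integral {0..R2} (\<lambda>s. k (complex_of_real s)) + integral {0..R1} (\<lambda>s. k (- complex_of_real s))"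
  have cont: "continuous_on S (\<lambda>y. k (complex_of_real y))" for S
    using continuous_on_real_line[OF pos neg] by (rule continuous_on_subset) simp
  have split: "(LINT y:{-R1..R2}|lborel. k (complex_of_real y)) = ?I R1 R2" if "0 \<le> R1" "0 \<le> R2" for R1 R2
  proof -
    have "(LINT y:{-R1..R2}|lborel. k (complex_of_real y)) = integral {-R1..R2} (\<lambda>y. k (complex_of_real y))"
      by (rule set_borel_integral_eq_integral(2)[OF borel_integrable_atLeastAtMost'[OF cont]])
    also have "\<dots> = integral {-R1..0} (\<lambda>y. k (complex_of_real y)) + integral {0..R2} (\<lambda>y. k (complex_of_real y))"
      using that by (intro Henstock_Kurzweil_Integration.integral_combine[symmetric]
          integrable_continuous_interval cont) auto
    also have "integral {-R1..0} (\<lambda>y. k (complex_of_real y)) = integral {0..R1} (\<lambda>s. k (- complex_of_real s))"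
      using Henstock_Kurzweil_Integration.integral_reflect_real[of 0 "-R1" "\<lambda>y. k (complex_of_real y)"] by simp
    finally show ?thesis by simp
  qed
  have "((\<lambda>p. ?I (fst p) (snd p)) \<longlongrightarrow> ray_integral \<tau> k + ray_integral \<tau> (\<lambda>z. k (- z))) (at_top \<times>\<^sub>F at_top)"
    using wedge_decay.integral_tendsto_ray_integral[OF pos] wedge_decay.integral_tendsto_ray_integral[OF neg]
    by (intro tendsto_add filterlim_compose[OF _ filterlim_snd] filterlim_compose[OF _ filterlim_fst]) auto
  moreover have "\<forall>\<^sub>F p in (at_top::real filter) \<times>\<^sub>F (at_top::real filter). 0 \<le> fst p \<and> 0 \<le> snd p"
    unfolding eventually_prod_filter
    by (intro exI[of _ "\<lambda>x::real. 0 \<le> x"] conjI eventually_ge_at_top) auto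
  then have "\<forall>\<^sub>F p in at_top \<times>\<^sub>F at_top.
      ?I (fst p) (snd p) = (\<lambda>(R1, R2). LINT y:{-R1..R2}|lborel. k (complex_of_real y)) p"
    by eventually_elim (auto simp: split)
  ultimately show ?thesis by (rule Lim_transform_eventually)
qed

theorem gaussian_regularization_eq_improper_integral:
  assumes pos: "wedge_decay \<tau> c b M k" and neg: "wedge_decay \<tau> c b M (\<lambda>z. k (- z))" and "\<tau> \<le> 1"
  shows "(\<forall>\<epsilon>>0. integrable lborel (\<lambda>y. complex_of_real (exp (- \<epsilon> * y\<^sup>2)) * k (complex_of_real y))) \<and>
         (\<exists>L. ((\<lambda>\<epsilon>. LINT y|lborel. complex_of_real (exp (- \<epsilon> * y\<^sup>2)) * k (complex_of_real y)) \<longlongrightarrow> L)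
                 (at_right 0) \<and>
              ((\<lambda>(R1, R2). LINT y:{-R1..R2}|lborel. k (complex_of_real y)) \<longlongrightarrow> L) (at_top \<times>\<^sub>F at_top))"
proof -
  define g where "g \<epsilon> = (\<lambda>z. exp (- complex_of_real \<epsilon> * z\<^sup>2) * k z)" for \<epsilon>
  have g_real: "g \<epsilon> (complex_of_real y) = complex_of_real (exp (- \<epsilon> * y\<^sup>2)) * k (complex_of_real y)" for \<epsilon> y
    by (simp add: g_def flip: exp_of_real)
  have g_decay: "wedge_decay \<tau> c b M (g \<epsilon>)" "wedge_decay \<tau> c b M (\<lambda>z. g \<epsilon> (- z))" if "0 \<le> \<epsilon>" for \<epsilon>
    using wedge_decay_gaussian_factor[OF pos \<open>\<tau> \<le> 1\<close> that] wedge_decay_gaussian_factor[OF neg \<open>\<tau> \<le> 1\<close> that]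
    by (simp_all add: g_def)
  have integrable: "integrable lborel (\<lambda>y. g \<epsilon> (complex_of_real y))" if "0 < \<epsilon>" for \<epsilon>
  proof (rule Bochner_Integration.integrable_bound)
    show "integrable lborel (\<lambda>y. M * exp (- \<epsilon> * y\<^sup>2))"
      using integrable_gaussian[OF that] by simp
    show "(\<lambda>y. g \<epsilon> (complex_of_real y)) \<in> borel_measurable lborel"
      using continuous_on_real_line[OF g_decay] that by (simp add: borel_measurable_continuous_onI)
    show "AE y in lborel. norm (g \<epsilon> (complex_of_real y)) \<le> norm (M * exp (- \<epsilon> * y\<^sup>2))"
      using norm_le_on_real_line[OF pos neg] wedge_decay.M_nonneg[OF pos]
      by (intro AE_I2) (simp add: g_real norm_mult mult.commute mult_left_mono)
  qed
  have integral_eq: "(LINT y|lborel. g \<epsilon> (complex_of_real y)) = ray_integral \<tau> (g \<epsilon>) + ray_integral \<tau> (\<lambda>z. g \<epsilon> (- z))"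
    if "0 < \<epsilon>" for \<epsilon>
  proof (rule tendsto_unique[OF trivial_limit_at_top_linorder
        set_integral_symmetric_interval_tendsto[OF integrable[OF that]]])
    show "((\<lambda>R. LINT y:{-R..R}|lborel. g \<epsilon> (complex_of_real y))
        \<longlongrightarrow> ray_integral \<tau> (g \<epsilon>) + ray_integral \<tau> (\<lambda>z. g \<epsilon> (- z))) at_top"
      using filterlim_compose[OF improper_integral_tendsto_ray_integrals[OF g_decay]
          filterlim_Pair[OF filterlim_ident filterlim_ident]] that
      by simp
  qed
  define L where "L = ray_integral \<tau> k + ray_integral \<tau> (\<lambda>z. k (- z))"
  have "((\<lambda>\<epsilon>. ray_integral \<tau> (g \<epsilon>) + ray_integral \<tau> (\<lambda>z. g \<epsilon> (- z))) \<longlongrightarrow> L) (at_right 0)"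
    unfolding L_def g_def
    using wedge_decay.ray_integral_gaussian_factor_tendsto[OF pos \<open>\<tau> \<le> 1\<close>]
      wedge_decay.ray_integral_gaussian_factor_tendsto[OF neg \<open>\<tau> \<le> 1\<close>]
    by (intro tendsto_add) simp_all
  then have "((\<lambda>\<epsilon>. LINT y|lborel. g \<epsilon> (complex_of_real y)) \<longlongrightarrow> L) (at_right 0)"
    by (rule Lim_transform_eventually)
      (use eventually_at_right_less[of "0::real"] in \<open>auto elim: eventually_mono simp: integral_eq\<close>)
  then show ?thesis
    using integrable improper_integral_tendsto_ray_integrals[OF pos neg]
    unfolding L_def g_real by blast
qed

lemma norm_chirp_product_le:
  fixes a x :: real and z g f :: complex
  assumes "0 \<le> a" and g: "cmod g \<le> Ag * exp (Bg * \<bar>Im z\<bar>)" and f: "cmod f \<le> Af * exp (Bf * \<bar>Im z\<bar>)"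
  shows "cmod (exp (\<i> * complex_of_real a * (z - complex_of_real x)\<^sup>2) * g * f)
           \<le> Ag * Af * exp ((2 * a * \<bar>x\<bar> + Bg + Bf) * \<bar>Im z\<bar> - 2 * a * Re z * Im z)"
proof -
  have "cmod (exp (\<i> * complex_of_real a * (z - complex_of_real x)\<^sup>2))
      = exp (2 * a * (x * Im z) - 2 * a * Re z * Im z)"
    by (simp add: norm_exp_eq_Re power2_eq_square algebra_simps)
  also have "\<dots> \<le> exp (2 * a * \<bar>x\<bar> * \<bar>Im z\<bar> - 2 * a * Re z * Im z)"
    using assms(1) by (simp add: mult.assoc mult_left_mono abs_ge_self flip: abs_mult)
  finally have "cmod (exp (\<i> * complex_of_real a * (z - complex_of_real x)\<^sup>2)) * cmod g * cmod f
      \<le> exp (2 * a * \<bar>x\<bar> * \<bar>Im z\<bar> - 2 * a * Re z * Im z) * (Ag * exp (Bg * \<bar>Im z\<bar>)) * (Af * exp (Bf * \<bar>Im z\<bar>))"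
    using g f mult_nonneg_nonneg[OF exp_ge_zero order_trans[OF norm_ge_zero g]] by (intro mult_mono) auto
  also have "\<dots> = Ag * Af * exp ((2 * a * \<bar>x\<bar> + Bg + Bf) * \<bar>Im z\<bar> - 2 * a * Re z * Im z)"
    by (simp add: distrib_right exp_diff exp_add)
  finally show ?thesis by (simp add: norm_mult)
qed

lemma wedge_decay_of_bound:
  assumes hol: "k holomorphic_on S" and sub: "wedge \<tau> \<union> uminus ` wedge \<tau> \<subseteq> S" and "0 < \<tau>" "0 < c"
    and bound: "\<And>z. z \<in> S \<Longrightarrow> cmod (k z) \<le> M * exp (b * \<bar>Im z\<bar> - c * Re z * Im z)"
  shows "wedge_decay \<tau> c b M k" "wedge_decay \<tau> c b M (\<lambda>z. k (- z))"
proof -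
  have Im_abs: "\<bar>Im z\<bar> = Im z" if "z \<in> wedge \<tau>" for z
    using that by (simp add: wedge_def)
  show "wedge_decay \<tau> c b M k"
  proof
    show "k holomorphic_on wedge \<tau>"
      using hol sub by (rule holomorphic_on_subset[OF _ order_trans[OF Un_upper1]])
    fix z assume "z \<in> wedge \<tau>"
    then show "cmod (k z) \<le> M * exp (b * Im z - c * Re z * Im z)"
      using bound[of z] sub Im_abs by auto
  qed fact+
  show "wedge_decay \<tau> c b M (\<lambda>z. k (- z))"
  proof
    show "(\<lambda>z. k (- z)) holomorphic_on wedge \<tau>"
      using holomorphic_on_compose_gen[of uminus "wedge \<tau>" k S]
        holomorphic_on_minus[OF holomorphic_on_id, of "wedge \<tau>"] hol sub
      by (auto simp: o_def)
    fix z assume "z \<in> wedge \<tau>"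
    then show "cmod (k (- z)) \<le> M * exp (b * Im z - c * Re z * Im z)"
      using bound[of "- z"] sub Im_abs by auto
  qed fact+
qed

lemma assumption_G_Im_product_bound:
  assumes G: "assumption_G_Im T V \<alpha> \<Omega> G" and t: "t \<in> time_int T"
    and F: "\<forall>z\<in>\<Omega>. cmod (F z) \<le> A * exp (B * \<bar>Im z\<bar>)"
  shows "\<exists>c M b. 0 < c \<and>
           (\<forall>z\<in>\<Omega>. cmod (G t x z * F z) \<le> M * exp (b * \<bar>Im z\<bar> - c * Re z * Im z))"
proof -
  obtain a Gtil A0 B0 where a: "\<forall>t\<in>time_int T. 0 < a t"
    and factor: "\<forall>t\<in>time_int T. \<forall>x. \<forall>z\<in>\<Omega>.
          G t x z = exp (\<i> * complex_of_real (a t) * (z - complex_of_real x)\<^sup>2) * Gtil t x z"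
    and Gtil: "\<forall>t\<in>time_int T. \<forall>x. \<forall>z\<in>\<Omega>. cmod (Gtil t x z) \<le> A0 t x * exp (B0 t x * \<bar>Im z\<bar>)"
    using G unfolding assumption_G_Im_def by (elim conjE exE) (rule that; assumption)
  have "cmod (G t x z * F z)
      \<le> A0 t x * A * exp ((2 * a t * \<bar>x\<bar> + B0 t x + B) * \<bar>Im z\<bar> - 2 * a t * Re z * Im z)"
    if "z \<in> \<Omega>" for z
    using norm_chirp_product_le[where a="a t" and x=x and z=z and g="Gtil t x z" and f="F z"
        and Ag="A0 t x" and Bg="B0 t x" and Af=A and Bf=B] a factor Gtil F t that
    by (simp add: less_imp_le)
  moreover have "0 < 2 * a t" using a t by simp
  ultimately show ?thesis by blast
qed

theorem mainTheorem5:
  fixes T :: ereal and V :: "real \<Rightarrow> real \<Rightarrow> complex" and \<alpha> :: real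
    and \<Omega> :: "complex set" and G :: "real \<Rightarrow> real \<Rightarrow> complex \<Rightarrow> complex"
    and F :: "complex \<Rightarrow> complex" and A B :: real and t x :: real
  assumes "assumption_G_Im T V \<alpha> \<Omega> G"
    and "F holomorphic_on \<Omega>"
    and "0 \<le> A" and "0 \<le> B"
    and "\<forall>z\<in>\<Omega>. cmod (F z) \<le> A * exp (B * \<bar>Im z\<bar>)"
    and "t \<in> time_int T"
  shows "(\<forall>\<epsilon>>0. integrable lborel
            (\<lambda>y. complex_of_real (exp (- \<epsilon> * y\<^sup>2)) * G t x (complex_of_real y) * F (complex_of_real y))) \<and>
         (\<exists>L. ((\<lambda>\<epsilon>. LINT y|lborel.
                    complex_of_real (exp (- \<epsilon> * y\<^sup>2)) * G t x (complex_of_real y) * F (complex_of_real y))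
                 \<longlongrightarrow> L) (at_right 0) \<and>
              ((\<lambda>(R1, R2). LINT y:{-R1..R2}|lborel. G t x (complex_of_real y) * F (complex_of_real y))
                 \<longlongrightarrow> L) (at_top \<times>\<^sub>F at_top))"
proof -
  have \<alpha>: "0 < \<alpha>" "\<alpha> < pi / 2" and sector: "double_sector \<alpha> \<subseteq> \<Omega>"
    and "G t x holomorphic_on \<Omega>"
    using assms(1,6) unfolding assumption_G_Im_def by simp_all
  then have holomorphic: "(\<lambda>z. G t x z * F z) holomorphic_on \<Omega>"
    using assms(2) by (intro holomorphic_intros)
  obtain c M b where "0 < c"
    and bound: "\<And>z. z \<in> \<Omega> \<Longrightarrow> cmod (G t x z * F z) \<le> M * exp (b * \<bar>Im z\<bar> - c * Re z * Im z)"
    using assumption_G_Im_product_bound[OF assms(1,6,5)] by blast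
  define \<tau> where "\<tau> = min 1 (tan \<alpha>)"
  have \<tau>: "0 < \<tau>" "\<tau> \<le> 1" using \<alpha> by (simp_all add: \<tau>_def tan_gt_zero)
  have "wedge \<tau> \<subseteq> wedge (tan \<alpha>)" using wedge_mono[OF \<tau>(1)] by (simp add: \<tau>_def)
  then have "wedge \<tau> \<union> uminus ` wedge \<tau> \<subseteq> \<Omega>"
    using wedge_subset_double_sector[OF \<alpha>] sector by blast
  then have "wedge_decay \<tau> c b M (\<lambda>z. G t x z * F z)" "wedge_decay \<tau> c b M (\<lambda>z. G t x (- z) * F (- z))"
    using wedge_decay_of_bound[OF holomorphic _ \<tau>(1) \<open>0 < c\<close> bound] by simp_all
  from gaussian_regularization_eq_improper_integral[OF this \<tau>(2)] show ?thesis
    by (simp add: mult.assoc)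
qed

end
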